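(* For every positive integer $n$, $$\vartheta_2\!\left(\sum_{k=1}^{n} \frac{2^k}{k}\right) \geq s_2(n)$$ and, more strongly, $$\vartheta_2\!\left(\sum_{k=1}^{n} \frac{2^k}{k}\right) \geq n - \left\lfloor \frac{\log n}{\log 2} \right\rfloor.$$
   Context: $\vartheta_2$ denotes the $2$-adic valuation, extended to nonzero rational numbers by $\vartheta_2(a/b) = \vartheta_2(a) - \vartheta_2(b)$. $s_2(n)$ denotes the sum of the binary digits of $n$. $\lfloor x \rfloor$ is the integer part of $x$. *)

theory Defs
  imports Complex_Main "HOL-Computational_Algebra.Primes"
begin

text \<open>2-adic valuation of a nonzero rational a/b (in lowest terms): v2(a) - v2(b).
  (For q = 0 the value is 0 by this definition; it is never used at 0 here.)\<close>
definition vartheta2 :: "rat \<Rightarrow> int" where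
  "vartheta2 q = (let (a, b) = quotient_of q in
      int (multiplicity (2::int) a) - int (multiplicity (2::int) b))"

fun s2 :: "nat \<Rightarrow> nat" where
  "s2 n = (if n = 0 then 0 else n mod 2 + s2 (n div 2))"

end

theory Submission
  imports Defs
begin

text \<open>
  Put \<open>S\<^sub>N = \<Sum>\<^sub>k\<^sub>=\<^sub>1\<^sup>N 2\<^sup>k / k\<close>. Pascal's rule and the closed form
  \<open>\<Sum>\<^sub>j (-1)\<^sup>j C(N-j, j) 4\<^sup>N\<^sup>-\<^sup>j = (N+1) 2\<^sup>N\<close> give, by induction on \<open>N\<close>,
  \<open>2 S\<^sub>N = \<Sum>\<^sub>j\<^sub><\<^sub>N (-1)\<^sup>j C(N-j-1, j) 4\<^sup>N\<^sup>-\<^sup>j / (N-j)\<close>.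
  A term survives only if \<open>m = N - j \<ge> (N+1)/2\<close>, and then \<open>4\<^sup>m / m\<close> has 2-adic valuation
  \<open>2m - \<vartheta>\<^sub>2(m) \<ge> N + 1 - L\<close> with \<open>L = \<lfloor>log\<^sub>2 N\<rfloor>\<close>. Hence \<open>\<vartheta>\<^sub>2(S\<^sub>N) \<ge> N - L\<close>,
  and \<open>N - L \<ge> s\<^sub>2(N)\<close> because each of the \<open>L\<close> halvings \<open>n \<mapsto> \<lfloor>n/2\<rfloor>\<close> lowers
  \<open>n - s\<^sub>2(n)\<close> by \<open>\<lfloor>n/2\<rfloor> \<ge> 1\<close>.
\<close>

text \<open>\<open>pow2_dvd c q\<close> says \<open>\<vartheta>\<^sub>2(q) \<ge> c\<close>, with \<open>q = 0\<close> allowed.\<close>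
definition pow2_dvd :: "nat \<Rightarrow> rat \<Rightarrow> bool" where
  "pow2_dvd c q \<longleftrightarrow> (\<exists>a b::int. odd b \<and> q = 2 ^ c * of_int a / of_int b)"

lemma pow2_dvd_0: "pow2_dvd c 0"
  unfolding pow2_dvd_def by (rule exI[of _ 0], rule exI[of _ 1]) simp

lemma pow2_dvd_add:
  assumes "pow2_dvd c p" "pow2_dvd c q"
  shows "pow2_dvd c (p + q)"
proof -
  obtain a b a' b' :: int where ab: "odd b" "p = 2 ^ c * of_int a / of_int b"
    and ab': "odd b'" "q = 2 ^ c * of_int a' / of_int b'"
    using assms unfolding pow2_dvd_def by blast
  have "b \<noteq> 0" "b' \<noteq> 0" using ab ab' by auto
  then have "p + q = 2 ^ c * of_int (a * b' + a' * b) / of_int (b * b')"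
    using ab ab' by (simp add: field_simps)
  moreover have "odd (b * b')" using ab ab' by simp
  ultimately show ?thesis unfolding pow2_dvd_def by blast
qed

lemma pow2_dvd_sum: "(\<And>i. i \<in> A \<Longrightarrow> pow2_dvd c (f i)) \<Longrightarrow> pow2_dvd c (sum f A)"
  by (induction A rule: infinite_finite_induct) (simp_all add: pow2_dvd_0 pow2_dvd_add)

lemma pow2_dvd_mult_of_int: "pow2_dvd c q \<Longrightarrow> pow2_dvd c (of_int z * q)"
  unfolding pow2_dvd_def
  by (metis (no_types, opaque_lifting) mult.left_commute of_int_mult times_divide_eq_right)

lemma pow2_dvd_Suc_half: "pow2_dvd (Suc c) q \<Longrightarrow> pow2_dvd c (q / 2)"
  unfolding pow2_dvd_def by (auto simp: field_simps)

lemma pow2_dvd_mono: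
  assumes "pow2_dvd c q" "d \<le> c"
  shows "pow2_dvd d q"
proof -
  obtain a b :: int where ab: "odd b" "q = 2 ^ c * of_int a / of_int b"
    using assms(1) unfolding pow2_dvd_def by blast
  have "(2::rat) ^ c = 2 ^ d * of_int (2 ^ (c - d))"
    using assms(2) by (simp flip: power_add)
  then have "q = 2 ^ d * of_int (2 ^ (c - d) * a) / of_int b" using ab by simp
  then show ?thesis using ab unfolding pow2_dvd_def by blast
qed

lemma vartheta2_ge_if_pow2_dvd:
  assumes "pow2_dvd c q" "q \<noteq> 0"
  shows "vartheta2 q \<ge> int c"
proof -
  obtain a b :: int where ab: "odd b" "q = 2 ^ c * of_int a / of_int b"
    using assms(1) unfolding pow2_dvd_def by blast
  obtain p d where pd: "quotient_of q = (p, d)" by (cases "quotient_of q")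
  have "d > 0" using quotient_of_denom_pos[OF pd] .
  have q_eq: "q = of_int p / of_int d" using quotient_of_div[OF pd] .
  have "p \<noteq> 0" using assms(2) q_eq by auto
  have "b \<noteq> 0" using ab by auto
  have "of_int (p * b) = (of_int (2 ^ c * a * d) :: rat)"
    using ab q_eq \<open>d > 0\<close> \<open>b \<noteq> 0\<close> by (simp add: field_simps)
  then have cross: "p * b = 2 ^ c * a * d"
    by (simp only: of_int_eq_iff)
  define e where "e = multiplicity (2::int) d"
  have "2 ^ e dvd d" unfolding e_def by (rule multiplicity_dvd)
  then have "2 ^ (c + e) dvd p * b" unfolding cross by (simp add: power_add mult_dvd_mono)
  moreover have "coprime ((2::int) ^ (c + e)) b" using ab by simp
  ultimately have "2 ^ (c + e) dvd p" using coprime_dvd_mult_left_iff by blast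
  then have "multiplicity 2 p \<ge> c + e" using \<open>p \<noteq> 0\<close> by (intro multiplicity_geI) auto
  then show ?thesis unfolding vartheta2_def pd e_def by simp
qed

lemma pow2_dvd_four_pow_div:
  assumes "0 < m" "m < 2 ^ Suc L"
  shows "pow2_dvd (2 * m - L) (4 ^ m / of_nat m)"
proof -
  define v where "v = multiplicity 2 m"
  obtain w where w: "m = 2 ^ v * w" "\<not> 2 dvd w"
    using multiplicity_decompose'[of m 2] assms(1) unfolding v_def by auto
  have "2 ^ v \<le> m" using w odd_pos[of w] by simp
  then have "v \<le> L"
    using assms(2) power_less_imp_less_exp[of "2::nat" v "Suc L"] by simp
  have "v \<le> 2 * m" using \<open>2 ^ v \<le> m\<close> less_exp[of v] by linarith
  have "(4::rat) ^ m = 2 ^ (2 * m - v) * 2 ^ v"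
    using \<open>v \<le> 2 * m\<close> by (simp add: power_mult flip: power_add)
  moreover have "w \<noteq> 0" using odd_pos[OF w(2)] by simp
  ultimately have "(4::rat) ^ m / of_nat m = 2 ^ (2 * m - v) * of_int 1 / of_int (int w)"
    using w(1) by simp
  then have "pow2_dvd (2 * m - v) (4 ^ m / of_nat m)"
    unfolding pow2_dvd_def using w(2) by (intro exI[of _ 1] exI[of _ "int w"]) simp
  then show ?thesis by (rule pow2_dvd_mono) (use \<open>v \<le> L\<close> in linarith)
qed

definition diag_sum :: "nat \<Rightarrow> rat" where
  "diag_sum N = (\<Sum>j\<le>N. (-1) ^ j * of_nat ((N - j) choose j) * 4 ^ (N - j))"

lemma choose_Suc_diff_Suc:
  "i \<le> Suc N \<Longrightarrow> (Suc N - i) choose Suc i = ((N - i) choose i) + ((N - i) choose Suc i)"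
  by (cases "i \<le> N") (simp_all add: Suc_diff_le)

lemma diag_sum_rec: "diag_sum (Suc (Suc N)) = 4 * diag_sum (Suc N) - 4 * diag_sum N"
proof -
  define A where "A = (\<Sum>i\<le>Suc N. (-1::rat) ^ i * of_nat ((N - i) choose i) * 4 ^ (Suc N - i))"
  define B where "B = (\<Sum>i\<le>Suc N. (-1::rat) ^ i * of_nat ((N - i) choose Suc i) * 4 ^ (Suc N - i))"
  have "diag_sum (Suc (Suc N)) = 4 ^ Suc (Suc N) +
      (\<Sum>i\<le>Suc N. (-1::rat) ^ Suc i * of_nat ((Suc N - i) choose Suc i) * 4 ^ (Suc N - i))"
    unfolding diag_sum_def by (subst sum.atMost_Suc_shift) simp
  also have "(\<Sum>i\<le>Suc N. (-1::rat) ^ Suc i * of_nat ((Suc N - i) choose Suc i) * 4 ^ (Suc N - i))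
      = - A - B"
    unfolding A_def B_def
    by (simp add: choose_Suc_diff_Suc sum_negf[symmetric] sum.distrib[symmetric] algebra_simps)
  also have "A = 4 * diag_sum N"
  proof -
    have "A = (\<Sum>i\<le>N. 4 * ((-1::rat) ^ i * of_nat ((N - i) choose i) * 4 ^ (N - i)))"
      unfolding A_def by simp (rule sum.cong, auto simp: Suc_diff_le)
    then show ?thesis unfolding diag_sum_def by (simp add: sum_distrib_left)
  qed
  also have "4 * diag_sum (Suc N) = 4 ^ Suc (Suc N) - B"
  proof -
    have "diag_sum (Suc N) =
        4 ^ Suc N - (\<Sum>i\<le>N. (-1::rat) ^ i * of_nat ((N - i) choose Suc i) * 4 ^ (N - i))"
      unfolding diag_sum_def by (subst sum.atMost_Suc_shift) (simp add: sum_negf[symmetric])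
    moreover have "B = (\<Sum>i\<le>N. 4 * ((-1::rat) ^ i * of_nat ((N - i) choose Suc i) * 4 ^ (N - i)))"
      unfolding B_def by simp (rule sum.cong, auto simp: Suc_diff_le)
    ultimately show ?thesis by (simp add: sum_distrib_left)
  qed
  ultimately show ?thesis by simp
qed

lemma diag_sum_closed_form: "diag_sum N = of_nat (N + 1) * 2 ^ N"
proof -
  have "diag_sum N = of_nat (N + 1) * 2 ^ N \<and> diag_sum (Suc N) = of_nat (N + 2) * 2 ^ Suc N"
  proof (induction N)
    case 0
    then show ?case by (simp add: diag_sum_def)
  next
    case (Suc N)
    then show ?case by (simp add: diag_sum_rec algebra_simps)
  qed
  then show ?thesis ..
qed

lemma choose_diag_absorption:
  assumes "j < N"
  shows "N * ((N - j) choose j) =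
    (N - j) * (((N - j) choose j) + (if j = 0 then 0 else (N - j - 1) choose (j - 1)))"
proof (cases j)
  case (Suc k)
  obtain m where m: "N - j = Suc m" using assms by (metis Suc_diff_Suc)
  have "j * ((N - j) choose j) = (N - j) * ((N - j - 1) choose (j - 1))"
    using Suc_times_binomial[of k m] m Suc by simp
  moreover have "N * ((N - j) choose j) = (N - j) * ((N - j) choose j) + j * ((N - j) choose j)"
    using assms by (simp flip: add_mult_distrib)
  ultimately show ?thesis using Suc by (simp add: add_mult_distrib2)
qed simp

lemma choose_diag_absorption_frac:
  assumes "j < N"
  shows "of_nat N * (of_nat ((N - j) choose j) / of_nat (N - j)) =
    (of_nat ((N - j) choose j) + of_nat (if j = 0 then 0 else (N - j - 1) choose (j - 1)) :: 'a::field_char_0)"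
proof -
  define d where "d = (of_nat (N - j) :: 'a)"
  have "d \<noteq> 0" using assms unfolding d_def by simp
  have "of_nat N * of_nat ((N - j) choose j) =
      d * (of_nat ((N - j) choose j) + (of_nat (if j = 0 then 0 else (N - j - 1) choose (j - 1)) :: 'a))"
    unfolding d_def using choose_diag_absorption[OF assms] by (metis of_nat_add of_nat_mult)
  then show ?thesis unfolding d_def[symmetric] using \<open>d \<noteq> 0\<close> by (simp add: field_simps)
qed

lemma sum_shifted_diag:
  "(\<Sum>j<N. (-1) ^ j * of_nat (if j = 0 then 0 else (N - j - 1) choose (j - 1)) * 4 ^ (N - j))
    = (if N < 2 then 0 else - 4 * diag_sum (N - 2))"
proof (cases "N < 2")
  case True
  then have "N = 0 \<or> N = 1" by auto
  then show ?thesis by auto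
next
  case False
  then obtain K where K: "N = Suc (Suc K)" by (metis add_2_eq_Suc le_Suc_ex not_less)
  have "(\<Sum>j<N. (-1) ^ j * of_nat (if j = 0 then 0 else (N - j - 1) choose (j - 1)) * 4 ^ (N - j))
      = (\<Sum>i\<le>K. - 4 * ((-1) ^ i * of_nat ((K - i) choose i) * (4::rat) ^ (K - i)))"
    unfolding K lessThan_Suc_atMost
    by (subst sum.atMost_Suc_shift) (auto intro!: sum.cong simp: Suc_diff_le)
  then show ?thesis using K unfolding diag_sum_def by (simp add: sum_distrib_left)
qed

definition diag_frac_sum :: "nat \<Rightarrow> rat" where
  "diag_frac_sum N = (\<Sum>j<N. (-1) ^ j * of_nat ((N - j) choose j) * 4 ^ (N - j) / of_nat (N - j))"

lemma diag_frac_sum_closed_form: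
  assumes "N \<ge> 1"
  shows "diag_frac_sum N = 2 ^ Suc N / of_nat N"
proof -
  obtain M where M: "N = Suc M" using assms by (cases N) auto
  have "of_nat N * diag_frac_sum N = (\<Sum>j<N. (-1) ^ j *
      (of_nat ((N - j) choose j) + of_nat (if j = 0 then 0 else (N - j - 1) choose (j - 1))) * 4 ^ (N - j))"
    unfolding diag_frac_sum_def sum_distrib_left
  proof (rule sum.cong)
    fix j assume "j \<in> {..<N}"
    have "of_nat N * ((-1) ^ j * of_nat ((N - j) choose j) * 4 ^ (N - j) / of_nat (N - j)) =
        (-1) ^ j * (of_nat N * (of_nat ((N - j) choose j) / of_nat (N - j))) * (4::rat) ^ (N - j)"
      by (simp add: algebra_simps)
    then show "of_nat N * ((-1) ^ j * of_nat ((N - j) choose j) * 4 ^ (N - j) / of_nat (N - j)) =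
        (-1) ^ j * (of_nat ((N - j) choose j) +
        of_nat (if j = 0 then 0 else (N - j - 1) choose (j - 1))) * (4::rat) ^ (N - j)"
      using \<open>j \<in> {..<N}\<close> by (simp only: lessThan_iff choose_diag_absorption_frac)
  qed simp
  also have "\<dots> = diag_sum N + (if N < 2 then 0 else - 4 * diag_sum (N - 2))"
    unfolding sum.distrib distrib_left distrib_right sum_shifted_diag[symmetric]
    by (simp add: M diag_sum_def lessThan_Suc_atMost)
  also have "\<dots> = 2 ^ Suc N"
  proof (cases "N < 2")
    case True
    then have "N = 1" using assms by simp
    then show ?thesis by (simp add: diag_sum_closed_form)
  next
    case False
    then obtain K where "N = Suc (Suc K)" by (metis add_2_eq_Suc le_Suc_ex not_less)
    then show ?thesis by (simp add: diag_sum_closed_form algebra_simps)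
  qed
  finally show ?thesis using assms by (simp add: field_simps)
qed

definition pow2_sum_expansion :: "nat \<Rightarrow> rat" where
  "pow2_sum_expansion N =
    (\<Sum>j<N. (-1) ^ j * of_nat ((N - j - 1) choose j) * 4 ^ (N - j) / of_nat (N - j))"

lemma pow2_sum_expansion_Suc:
  "pow2_sum_expansion (Suc N) = pow2_sum_expansion N + diag_frac_sum (Suc N)"
proof -
  have pascal: "of_nat ((N - i) choose Suc i) - of_nat ((N - Suc i) choose Suc i)
      = (of_nat ((N - Suc i) choose i) :: rat)" if "i < N" for i
  proof -
    have "N - i = Suc (N - Suc i)" using that by simp
    then show ?thesis by simp
  qed
  have "diag_frac_sum (Suc N) - pow2_sum_expansion (Suc N) = (\<Sum>j<Suc N. (-1) ^ j *
      (of_nat ((Suc N - j) choose j) - of_nat ((N - j) choose j)) * 4 ^ (Suc N - j) / of_nat (Suc N - j))"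
    unfolding diag_frac_sum_def pow2_sum_expansion_def sum_subtractf[symmetric]
    by (rule sum.cong) (simp_all add: diff_divide_distrib right_diff_distrib left_diff_distrib)
  also have "\<dots> = (\<Sum>i<N. - ((-1) ^ i * of_nat ((N - i - 1) choose i) * 4 ^ (N - i) / of_nat (N - i)))"
    by (subst sum.lessThan_Suc_shift, simp, intro sum.cong refl, simp add: pascal)
  also have "\<dots> = - pow2_sum_expansion N"
    unfolding pow2_sum_expansion_def by (simp add: sum_negf)
  finally show ?thesis by simp
qed

lemma pow2_sum_expansion_eq: "pow2_sum_expansion N = 2 * (\<Sum>k=1..N. 2 ^ k / of_nat k)"
proof (induction N)
  case 0
  then show ?case by (simp add: pow2_sum_expansion_def)
next
  case (Suc N)
  then show ?case by (simp add: pow2_sum_expansion_Suc diag_frac_sum_closed_form algebra_simps)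
qed

text \<open>Only the terms with \<open>2 (N - j) \<ge> N + 1\<close> have a nonzero binomial coefficient.\<close>
lemma pow2_dvd_pow2_sum_expansion:
  assumes "N < 2 ^ Suc L"
  shows "pow2_dvd (N + 1 - L) (pow2_sum_expansion N)"
  unfolding pow2_sum_expansion_def
proof (rule pow2_dvd_sum)
  fix j assume "j \<in> {..<N}"
  show "pow2_dvd (N + 1 - L) ((-1) ^ j * of_nat ((N - j - 1) choose j) * 4 ^ (N - j) / of_nat (N - j))"
  proof (cases "N - j - 1 < j")
    case True
    then show ?thesis by (simp add: binomial_eq_0 pow2_dvd_0)
  next
    case False
    have "pow2_dvd (2 * (N - j) - L) (4 ^ (N - j) / of_nat (N - j))"
      using \<open>j \<in> {..<N}\<close> assms by (intro pow2_dvd_four_pow_div) auto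
    then have "pow2_dvd (N + 1 - L) (4 ^ (N - j) / of_nat (N - j))"
      by (rule pow2_dvd_mono) (use False \<open>j \<in> {..<N}\<close> in auto)
    then have "pow2_dvd (N + 1 - L)
        (of_int ((-1) ^ j * int ((N - j - 1) choose j)) * (4 ^ (N - j) / of_nat (N - j)))"
      by (rule pow2_dvd_mult_of_int)
    then show ?thesis by simp
  qed
qed

declare s2.simps [simp del]

lemma s2_0 [simp]: "s2 0 = 0"
  by (simp add: s2.simps)

lemma s2_mod_div: "n \<noteq> 0 \<Longrightarrow> s2 n = n mod 2 + s2 (n div 2)"
  by (simp add: s2.simps)

lemma s2_le_self: "s2 n \<le> n"
proof (induction n rule: s2.induct)
  case (1 n)
  show ?case
  proof (cases "n = 0")
    case False
    then have "s2 (n div 2) \<le> n div 2" by (rule 1)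
    then show ?thesis using s2_mod_div[OF False] by presburger
  qed simp
qed

lemma s2_add_le: "2 ^ L \<le> n \<Longrightarrow> s2 n + L \<le> n"
proof (induction L arbitrary: n)
  case 0
  then show ?case using s2_le_self by simp
next
  case (Suc L)
  have "n \<noteq> 0" using Suc.prems by (intro notI) simp
  have "(2::nat) ^ L \<le> n div 2" using Suc.prems div_le_mono[of "2 * 2 ^ L" n 2] by simp
  then have "1 \<le> n div 2" using one_le_power[of "2::nat" L] by linarith
  moreover have "s2 (n div 2) + L \<le> n div 2" by (rule Suc.IH) fact
  ultimately show ?case using s2_mod_div[OF \<open>n \<noteq> 0\<close>] by presburger
qed

lemma floor_log2_nat:
  assumes "n \<ge> 1"
  obtains L where "\<lfloor>ln (real n) / ln 2\<rfloor> = int L" "2 ^ L \<le> n" "n < 2 ^ Suc L"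
proof -
  have "\<lfloor>log 2 (real n)\<rfloor> \<ge> 0" using assms by simp
  then obtain L where L: "\<lfloor>log 2 (real n)\<rfloor> = int L" by (metis nonneg_int_cases)
  then have "2 ^ L \<le> n \<and> n < 2 ^ Suc L"
    using floor_log_nat_eq_powr_iff[of 2 n L] assms by simp
  then show thesis using L that by (simp add: log_def)
qed

theorem theorem2:
  fixes n :: nat
  assumes "n \<ge> 1"
  shows "vartheta2 (\<Sum>k=1..n. 2 ^ k / of_nat k) \<ge> int (s2 n)
     \<and> vartheta2 (\<Sum>k=1..n. 2 ^ k / of_nat k) \<ge> int n - \<lfloor>ln (real n) / ln 2\<rfloor>"
proof -
  define S :: rat where "S = (\<Sum>k=1..n. 2 ^ k / of_nat k)"
  obtain L where floor_eq: "\<lfloor>ln (real n) / ln 2\<rfloor> = int L"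
    and bounds: "2 ^ L \<le> n" "n < 2 ^ Suc L"
    using floor_log2_nat[OF assms] .
  have "L \<le> n" using bounds(1) less_exp[of L] by linarith
  have "pow2_dvd (Suc (n - L)) (2 * S)"
    using pow2_dvd_pow2_sum_expansion[OF bounds(2)] \<open>L \<le> n\<close>
    unfolding S_def pow2_sum_expansion_eq by (simp add: Suc_diff_le)
  then have "pow2_dvd (n - L) S" using pow2_dvd_Suc_half by fastforce
  moreover have "S > 0" unfolding S_def using assms by (intro sum_pos) auto
  ultimately have "vartheta2 S \<ge> int (n - L)" by (intro vartheta2_ge_if_pow2_dvd) auto
  moreover have "s2 n + L \<le> n" using s2_add_le[OF bounds(1)] .
  ultimately show ?thesis using floor_eq \<open>L \<le> n\<close> unfolding S_def by simp
qed

end
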